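(* Let $H$ be a quasi-bialgebra, $\mathcal{A}$ an $H$-bimodule algebra, $\mathbb{A}$ an $H$-bicomodule algebra and $F\in H\otimes H$ a gauge transformation. Then the L-R-smash product $\mathcal{A}\natural\mathbb{A}$ (over $H$) and the L-R-smash product ${}_F\mathcal{A}_{F^{-1}}\natural{}^F\mathbb{A}^{F^{-1}}$ (over $H_F$) have the same multiplication on $\mathcal{A}\otimes\mathbb{A}$; i.e. the identity map is an algebra isomorphism.
   Context: Work over a field $k$. $H$ is a quasi-bialgebra $(H,\Delta,\varepsilon,\Phi)$ (unital algebra, algebra maps $\Delta(h)=h_1\otimes h_2$, $\varepsilon$, invertible $\Phi$ with $(id\otimes\Delta)\Delta(h)=\Phi(\Delta\otimes id)\Delta(h)\Phi^{-1}$, counit axioms, pentagon 3-cocycle condition, $(id\otimes\varepsilon\otimes id)\Phi=1\otimes1\otimes1$). $H$-bimodule algebras and $H$-bicomodule algebras $(\mathbb{A},\lambda,\rho,\Phi_\lambda,\Phi_\rho,\Phi_{\lambda,\rho})$ are defined in the sense of Hausser–Nill (algebras in the monoidal category of $H$-bimodules with associator $\Phi\cdot(-)\cdot\Phi^{-1}$; resp. compatible left and right quasi-coactions $\lambda(u)=u_{[-1]}\otimes u_{[0]}$, $\rho(u)=u_{<0>}\otimes u_{<1>}$ with reassociators $\Phi_\lambda\in H\otimes H\otimes\mathbb{A}$, $\Phi_\rho\in\mathbb{A}\otimes H\otimes H$, $\Phi_{\lambda,\rho}\in H\otimes\mathbb{A}\otimes H$). A gauge transformation is an invertible $F=F^1\otimes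 F^2\in H\otimes H$ with $(\varepsilon\otimes id)F=(id\otimes\varepsilon)F=1$; write $F^{-1}=G^1\otimes G^2$. $H_F$ is the quasi-bialgebra with the same algebra and counit, $\Delta_F(h)=F\Delta(h)F^{-1}$, $\Phi_F=(1\otimes F)(id\otimes\Delta)(F)\Phi(\Delta\otimes id)(F^{-1})(F^{-1}\otimes1)$. ${}_F\mathcal{A}_{F^{-1}}$ is $\mathcal{A}$ with the same unit and actions and new product $\varphi\circ\varphi'=(G^1\cdot\varphi\cdot F^1)(G^2\cdot\varphi'\cdot F^2)$; it is an $H_F$-bimodule algebra. ${}^F\mathbb{A}^{F^{-1}}$ is the $H_F$-bicomodule algebra with the same algebra, $\lambda$, $\rho$ and $\Phi_{\lambda,\rho}$, and with reassociators $\Phi_\lambda(F^{-1}\otimes1_{\mathbb{A}})$ and $(1_{\mathbb{A}}\otimes F)\Phi_\rho$. The L-R-smash product over a quasi-bialgebra $H$: $\mathcal{A}\otimes\mathbb{A}$ with product $(\varphi\natural u)(\psi\natural u')=(\tilde{x}^1_{\lambda}\cdot\varphi\cdot\theta^3u'_{<1>}\tilde{x}^2_{\rho})(\tilde{x}^2_{\lambda}u_{[-1]}\theta^1\cdot\psi\cdot\tilde{x}^3_{\rho})\natural\tilde{x}^3_{\lambda}u_{[0]}\theta^2u'_{<0>}\tilde{x}^1_{\rho}$, where $\Phi_\rho^{-1}=\tilde{x}^1_\rho\otimes\tilde{x}^2_\rho\otimes\tilde{x}^3_\rho$, $\Phi_\lambda^{-1}=\tilde{x}^1_\lambda\otimes\tilde{x}^2_\lambda\otimes\tilde{x}^3_\lambda$,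 $\Phi_{\lambda,\rho}^{-1}=\theta^1\otimes\theta^2\otimes\theta^3$. *)

theory Defs
  imports Main "HOL.Vector_Spaces"
begin

text \<open>An element of V1 (x) ... (x) Vn is represented by a formal sum of pure tensors,
i.e. a list of n-tuples; the list [(a1,b1),...,(am,bm)] stands for a1(x)b1 + ... + am(x)bm.
Equality in the tensor product is the congruence generated by commutativity of the
formal sum, additivity in each slot, zero, and moving scalars between slots.  The vector space structures are
given by the additive group structure of the types and explicit scalar multiplications.\<close>

inductive teq2 :: "('k::field \<Rightarrow> 'a::ab_group_add \<Rightarrow> 'a) \<Rightarrow> ('k \<Rightarrow> 'b::ab_group_add \<Rightarrow> 'b)
    \<Rightarrow> ('a \<times> 'b) list \<Rightarrow> ('a \<times> 'b) list \<Rightarrow> bool"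
  for s1 s2 where
  t2_refl: "teq2 s1 s2 xs xs"
| t2_sym: "teq2 s1 s2 xs ys \<Longrightarrow> teq2 s1 s2 ys xs"
| t2_trans: "teq2 s1 s2 xs ys \<Longrightarrow> teq2 s1 s2 ys zs \<Longrightarrow> teq2 s1 s2 xs zs"
| t2_app: "teq2 s1 s2 xs xs' \<Longrightarrow> teq2 s1 s2 ys ys' \<Longrightarrow> teq2 s1 s2 (xs @ ys) (xs' @ ys')"
| t2_swap: "teq2 s1 s2 (xs @ ys) (ys @ xs)"
| t2_zero: "teq2 s1 s2 [(0, b)] []"
| t2_add1: "teq2 s1 s2 [(a + a', b)] [(a, b), (a', b)]"
| t2_add2: "teq2 s1 s2 [(a, b + b')] [(a, b), (a, b')]"
| t2_sc: "teq2 s1 s2 [(s1 c a, b)] [(a, s2 c b)]"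

inductive teq3 :: "('k::field \<Rightarrow> 'a::ab_group_add \<Rightarrow> 'a) \<Rightarrow> ('k \<Rightarrow> 'b::ab_group_add \<Rightarrow> 'b)
    \<Rightarrow> ('k \<Rightarrow> 'c::ab_group_add \<Rightarrow> 'c)
    \<Rightarrow> ('a \<times> 'b \<times> 'c) list \<Rightarrow> ('a \<times> 'b \<times> 'c) list \<Rightarrow> bool"
  for s1 s2 s3 where
  t3_refl: "teq3 s1 s2 s3 xs xs"
| t3_sym: "teq3 s1 s2 s3 xs ys \<Longrightarrow> teq3 s1 s2 s3 ys xs"
| t3_trans: "teq3 s1 s2 s3 xs ys \<Longrightarrow> teq3 s1 s2 s3 ys zs \<Longrightarrow> teq3 s1 s2 s3 xs zs"
| t3_app: "teq3 s1 s2 s3 xs xs' \<Longrightarrow> teq3 s1 s2 s3 ys ys' \<Longrightarrow> teq3 s1 s2 s3 (xs @ ys) (xs' @ ys')"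
| t3_swap: "teq3 s1 s2 s3 (xs @ ys) (ys @ xs)"
| t3_zero: "teq3 s1 s2 s3 [(0, b, c)] []"
| t3_add1: "teq3 s1 s2 s3 [(a + a', b, c)] [(a, b, c), (a', b, c)]"
| t3_add2: "teq3 s1 s2 s3 [(a, b + b', c)] [(a, b, c), (a, b', c)]"
| t3_add3: "teq3 s1 s2 s3 [(a, b, c + c')] [(a, b, c), (a, b, c')]"
| t3_sc2: "teq3 s1 s2 s3 [(s1 r a, b, c)] [(a, s2 r b, c)]"
| t3_sc3: "teq3 s1 s2 s3 [(s1 r a, b, c)] [(a, b, s3 r c)]"

inductive teq4 :: "('k::field \<Rightarrow> 'a::ab_group_add \<Rightarrow> 'a) \<Rightarrow> ('k \<Rightarrow> 'b::ab_group_add \<Rightarrow> 'b)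
    \<Rightarrow> ('k \<Rightarrow> 'c::ab_group_add \<Rightarrow> 'c) \<Rightarrow> ('k \<Rightarrow> 'd::ab_group_add \<Rightarrow> 'd)
    \<Rightarrow> ('a \<times> 'b \<times> 'c \<times> 'd) list \<Rightarrow> ('a \<times> 'b \<times> 'c \<times> 'd) list \<Rightarrow> bool"
  for s1 s2 s3 s4 where
  t4_refl: "teq4 s1 s2 s3 s4 xs xs"
| t4_sym: "teq4 s1 s2 s3 s4 xs ys \<Longrightarrow> teq4 s1 s2 s3 s4 ys xs"
| t4_trans: "teq4 s1 s2 s3 s4 xs ys \<Longrightarrow> teq4 s1 s2 s3 s4 ys zs \<Longrightarrow> teq4 s1 s2 s3 s4 xs zs"
| t4_app: "teq4 s1 s2 s3 s4 xs xs' \<Longrightarrow> teq4 s1 s2 s3 s4 ys ys' \<Longrightarrow> teq4 s1 s2 s3 s4 (xs @ ys) (xs' @ ys')"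
| t4_swap: "teq4 s1 s2 s3 s4 (xs @ ys) (ys @ xs)"
| t4_zero: "teq4 s1 s2 s3 s4 [(0, b, c, d)] []"
| t4_add1: "teq4 s1 s2 s3 s4 [(a + a', b, c, d)] [(a, b, c, d), (a', b, c, d)]"
| t4_add2: "teq4 s1 s2 s3 s4 [(a, b + b', c, d)] [(a, b, c, d), (a, b', c, d)]"
| t4_add3: "teq4 s1 s2 s3 s4 [(a, b, c + c', d)] [(a, b, c, d), (a, b, c', d)]"
| t4_add4: "teq4 s1 s2 s3 s4 [(a, b, c, d + d')] [(a, b, c, d), (a, b, c, d')]"
| t4_sc2: "teq4 s1 s2 s3 s4 [(s1 r a, b, c, d)] [(a, s2 r b, c, d)]"
| t4_sc3: "teq4 s1 s2 s3 s4 [(s1 r a, b, c, d)] [(a, b, s3 r c, d)]"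
| t4_sc4: "teq4 s1 s2 s3 s4 [(s1 r a, b, c, d)] [(a, b, c, s4 r d)]"

definition tm2 :: "('a \<Rightarrow> 'a \<Rightarrow> 'a) \<Rightarrow> ('b \<Rightarrow> 'b \<Rightarrow> 'b) \<Rightarrow> ('a \<times> 'b) list \<Rightarrow> ('a \<times> 'b) list \<Rightarrow> ('a \<times> 'b) list" where
  "tm2 m1 m2 xs ys = [(m1 a a', m2 b b'). (a, b) \<leftarrow> xs, (a', b') \<leftarrow> ys]"

definition tm3 :: "('a \<Rightarrow> 'a \<Rightarrow> 'a) \<Rightarrow> ('b \<Rightarrow> 'b \<Rightarrow> 'b) \<Rightarrow> ('c \<Rightarrow> 'c \<Rightarrow> 'c)
    \<Rightarrow> ('a \<times> 'b \<times> 'c) list \<Rightarrow> ('a \<times> 'b \<times> 'c) list \<Rightarrow> ('a \<times> 'b \<times> 'c) list" where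
  "tm3 m1 m2 m3 xs ys = [(m1 a a', m2 b b', m3 c c'). (a, b, c) \<leftarrow> xs, (a', b', c') \<leftarrow> ys]"

definition tm4 :: "('a \<Rightarrow> 'a \<Rightarrow> 'a) \<Rightarrow> ('b \<Rightarrow> 'b \<Rightarrow> 'b) \<Rightarrow> ('c \<Rightarrow> 'c \<Rightarrow> 'c) \<Rightarrow> ('d \<Rightarrow> 'd \<Rightarrow> 'd)
    \<Rightarrow> ('a \<times> 'b \<times> 'c \<times> 'd) list \<Rightarrow> ('a \<times> 'b \<times> 'c \<times> 'd) list \<Rightarrow> ('a \<times> 'b \<times> 'c \<times> 'd) list" where
  "tm4 m1 m2 m3 m4 xs ys = [(m1 a a', m2 b b', m3 c c', m4 d d'). (a, b, c, d) \<leftarrow> xs, (a', b', c', d') \<leftarrow> ys]"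

text \<open>Applying a map V \<rightarrow> X (x) Y to one tensor slot, e.g. (f (x) id) and (id (x) f).\<close>

definition app2_1 :: "('a \<Rightarrow> ('c \<times> 'd) list) \<Rightarrow> ('a \<times> 'b) list \<Rightarrow> ('c \<times> 'd \<times> 'b) list" where
  "app2_1 f xs = [(c, d, b). (a, b) \<leftarrow> xs, (c, d) \<leftarrow> f a]"

definition app2_2 :: "('b \<Rightarrow> ('c \<times> 'd) list) \<Rightarrow> ('a \<times> 'b) list \<Rightarrow> ('a \<times> 'c \<times> 'd) list" where
  "app2_2 f xs = [(a, c, d). (a, b) \<leftarrow> xs, (c, d) \<leftarrow> f b]"

definition app3_1 :: "('a \<Rightarrow> ('p \<times> 'q) list) \<Rightarrow> ('a \<times> 'b \<times> 'c) list \<Rightarrow> ('p \<times> 'q \<times> 'b \<times> 'c) list" where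
  "app3_1 f xs = [(p, q, b, c). (a, b, c) \<leftarrow> xs, (p, q) \<leftarrow> f a]"

definition app3_2 :: "('b \<Rightarrow> ('p \<times> 'q) list) \<Rightarrow> ('a \<times> 'b \<times> 'c) list \<Rightarrow> ('a \<times> 'p \<times> 'q \<times> 'c) list" where
  "app3_2 f xs = [(a, p, q, c). (a, b, c) \<leftarrow> xs, (p, q) \<leftarrow> f b]"

definition app3_3 :: "('c \<Rightarrow> ('p \<times> 'q) list) \<Rightarrow> ('a \<times> 'b \<times> 'c) list \<Rightarrow> ('a \<times> 'b \<times> 'p \<times> 'q) list" where
  "app3_3 f xs = [(a, b, p, q). (a, b, c) \<leftarrow> xs, (p, q) \<leftarrow> f c]"

definition tinv2 where
  "tinv2 s1 s2 m1 m2 o1 o2 X Y \<longleftrightarrow>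
     teq2 s1 s2 (tm2 m1 m2 X Y) [(o1, o2)] \<and> teq2 s1 s2 (tm2 m1 m2 Y X) [(o1, o2)]"

definition tinv3 where
  "tinv3 s1 s2 s3 m1 m2 m3 o1 o2 o3 X Y \<longleftrightarrow>
     teq3 s1 s2 s3 (tm3 m1 m2 m3 X Y) [(o1, o2, o3)] \<and> teq3 s1 s2 s3 (tm3 m1 m2 m3 Y X) [(o1, o2, o3)]"

definition bilinear_mult :: "('k::field \<Rightarrow> 'a::ab_group_add \<Rightarrow> 'a) \<Rightarrow> ('a \<Rightarrow> 'a \<Rightarrow> 'a) \<Rightarrow> bool" where
  "bilinear_mult s m \<longleftrightarrow>
     (\<forall>a b c. m (a + b) c = m a c + m b c) \<and> (\<forall>a b c. m a (b + c) = m a b + m a c) \<and>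
     (\<forall>r a b. m (s r a) b = s r (m a b) \<and> m a (s r b) = s r (m a b))"

text \<open>Unital (not necessarily associative) k-algebra.\<close>
definition unital_kalg :: "('k::field \<Rightarrow> 'a::ab_group_add \<Rightarrow> 'a) \<Rightarrow> ('a \<Rightarrow> 'a \<Rightarrow> 'a) \<Rightarrow> 'a \<Rightarrow> bool" where
  "unital_kalg s m e \<longleftrightarrow> vector_space s \<and> bilinear_mult s m \<and> (\<forall>a. m e a = a \<and> m a e = a)"

definition kalg :: "('k::field \<Rightarrow> 'a::ab_group_add \<Rightarrow> 'a) \<Rightarrow> ('a \<Rightarrow> 'a \<Rightarrow> 'a) \<Rightarrow> 'a \<Rightarrow> bool" where
  "kalg s m e \<longleftrightarrow> unital_kalg s m e \<and> (\<forall>a b c. m (m a b) c = m a (m b c))"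

text \<open>k-linear map V \<rightarrow> X (x) Y (given by representatives).\<close>
definition lin_to2 :: "('k::field \<Rightarrow> 'v::ab_group_add \<Rightarrow> 'v) \<Rightarrow> ('k \<Rightarrow> 'a::ab_group_add \<Rightarrow> 'a)
    \<Rightarrow> ('k \<Rightarrow> 'b::ab_group_add \<Rightarrow> 'b) \<Rightarrow> ('v \<Rightarrow> ('a \<times> 'b) list) \<Rightarrow> bool" where
  "lin_to2 s s1 s2 f \<longleftrightarrow>
     (\<forall>u v. teq2 s1 s2 (f (u + v)) (f u @ f v)) \<and>
     (\<forall>r v. teq2 s1 s2 (f (s r v)) (map (\<lambda>(a, b). (s1 r a, b)) (f v)))"

text \<open>H is the type 'h (a unital ring) with scalar multiplication sH; Delta(h) is given by a
representative in H (x) H, Phi and Phii are representatives of Phi and Phi^-1.\<close>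

definition quasi_bialgebra :: "('k::field \<Rightarrow> 'h::ring_1 \<Rightarrow> 'h) \<Rightarrow> ('h \<Rightarrow> ('h \<times> 'h) list) \<Rightarrow> ('h \<Rightarrow> 'k)
    \<Rightarrow> ('h \<times> 'h \<times> 'h) list \<Rightarrow> ('h \<times> 'h \<times> 'h) list \<Rightarrow> bool" where
  "quasi_bialgebra sH \<Delta> \<epsilon> \<Phi> \<Phi>i \<longleftrightarrow>
     kalg sH (*) 1 \<and>
     lin_to2 sH sH sH \<Delta> \<and>
     (\<forall>a b. teq2 sH sH (\<Delta> (a * b)) (tm2 (*) (*) (\<Delta> a) (\<Delta> b))) \<and>
     teq2 sH sH (\<Delta> 1) [(1, 1)] \<and>
     (\<forall>a b. \<epsilon> (a + b) = \<epsilon> a + \<epsilon> b) \<and> (\<forall>r a. \<epsilon> (sH r a) = r * \<epsilon> a) \<and>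
     (\<forall>a b. \<epsilon> (a * b) = \<epsilon> a * \<epsilon> b) \<and> \<epsilon> 1 = 1 \<and>
     tinv3 sH sH sH (*) (*) (*) 1 1 1 \<Phi> \<Phi>i \<and>
     (\<forall>h. teq3 sH sH sH (app2_2 \<Delta> (\<Delta> h))
            (tm3 (*) (*) (*) (tm3 (*) (*) (*) \<Phi> (app2_1 \<Delta> (\<Delta> h))) \<Phi>i)) \<and>
     (\<forall>h. sum_list (map (\<lambda>(a, b). sH (\<epsilon> a) b) (\<Delta> h)) = h) \<and>
     (\<forall>h. sum_list (map (\<lambda>(a, b). sH (\<epsilon> b) a) (\<Delta> h)) = h) \<and>
     teq4 sH sH sH sH
       (tm4 (*) (*) (*) (*)
          (tm4 (*) (*) (*) (*) (map (\<lambda>(a, b, c). (1, a, b, c)) \<Phi>) (app3_2 \<Delta> \<Phi>))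
          (map (\<lambda>(a, b, c). (a, b, c, 1)) \<Phi>))
       (tm4 (*) (*) (*) (*) (app3_3 \<Delta> \<Phi>) (app3_1 \<Delta> \<Phi>)) \<and>
     teq2 sH sH (map (\<lambda>(a, b, c). (sH (\<epsilon> b) a, c)) \<Phi>) [(1, 1)]"

definition gauge_transformation :: "('k::field \<Rightarrow> 'h::ring_1 \<Rightarrow> 'h) \<Rightarrow> ('h \<Rightarrow> 'k)
    \<Rightarrow> ('h \<times> 'h) list \<Rightarrow> ('h \<times> 'h) list \<Rightarrow> bool" where
  "gauge_transformation sH \<epsilon> F Fi \<longleftrightarrow>
     tinv2 sH sH (*) (*) 1 1 F Fi \<and>
     sum_list (map (\<lambda>(a, b). sH (\<epsilon> a) b) F) = 1 \<and>
     sum_list (map (\<lambda>(a, b). sH (\<epsilon> b) a) F) = 1"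

text \<open>la h x = h.x, ra x h = x.h, mA the multiplication, oA the unit.\<close>

definition bimodule_algebra :: "('k::field \<Rightarrow> 'h::ring_1 \<Rightarrow> 'h) \<Rightarrow> ('h \<Rightarrow> ('h \<times> 'h) list) \<Rightarrow> ('h \<Rightarrow> 'k)
    \<Rightarrow> ('h \<times> 'h \<times> 'h) list \<Rightarrow> ('h \<times> 'h \<times> 'h) list
    \<Rightarrow> ('k \<Rightarrow> 'a::ab_group_add \<Rightarrow> 'a) \<Rightarrow> ('h \<Rightarrow> 'a \<Rightarrow> 'a) \<Rightarrow> ('a \<Rightarrow> 'h \<Rightarrow> 'a)
    \<Rightarrow> ('a \<Rightarrow> 'a \<Rightarrow> 'a) \<Rightarrow> 'a \<Rightarrow> bool" where
  "bimodule_algebra sH \<Delta> \<epsilon> \<Phi> \<Phi>i sA la ra mA oA \<longleftrightarrow>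
     unital_kalg sA mA oA \<and>
     (\<forall>h h' x. la (h + h') x = la h x + la h' x) \<and> (\<forall>h x y. la h (x + y) = la h x + la h y) \<and>
     (\<forall>r h x. la (sH r h) x = sA r (la h x) \<and> la h (sA r x) = sA r (la h x)) \<and>
     (\<forall>h h' x. ra x (h + h') = ra x h + ra x h') \<and> (\<forall>h x y. ra (x + y) h = ra x h + ra y h) \<and>
     (\<forall>r h x. ra x (sH r h) = sA r (ra x h) \<and> ra (sA r x) h = sA r (ra x h)) \<and>
     (\<forall>h h' x. la (h * h') x = la h (la h' x)) \<and> (\<forall>x. la 1 x = x) \<and>
     (\<forall>h h' x. ra x (h * h') = ra (ra x h) h') \<and> (\<forall>x. ra x 1 = x) \<and>
     (\<forall>h h' x. la h (ra x h') = ra (la h x) h') \<and>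
     (\<forall>h h' x y. la h (ra (mA x y) h') =
        sum_list [mA (la h1 (ra x k1)) (la h2 (ra y k2)). (h1, h2) \<leftarrow> \<Delta> h, (k1, k2) \<leftarrow> \<Delta> h']) \<and>
     (\<forall>h h'. la h (ra oA h') = sA (\<epsilon> h * \<epsilon> h') oA) \<and>
     (\<forall>x y z. mA (mA x y) z =
        sum_list [mA (la X1 (ra x x1)) (mA (la X2 (ra y x2)) (la X3 (ra z x3))).
                    (X1, X2, X3) \<leftarrow> \<Phi>, (x1, x2, x3) \<leftarrow> \<Phi>i])"

section \<open>H-comodule algebras and H-bicomodule algebras (Hausser--Nill)\<close>

definition left_comodule_algebra :: "('k::field \<Rightarrow> 'h::ring_1 \<Rightarrow> 'h) \<Rightarrow> ('h \<Rightarrow> ('h \<times> 'h) list) \<Rightarrow> ('h \<Rightarrow> 'k)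
    \<Rightarrow> ('h \<times> 'h \<times> 'h) list
    \<Rightarrow> ('k \<Rightarrow> 'u::ab_group_add \<Rightarrow> 'u) \<Rightarrow> ('u \<Rightarrow> 'u \<Rightarrow> 'u) \<Rightarrow> 'u
    \<Rightarrow> ('u \<Rightarrow> ('h \<times> 'u) list) \<Rightarrow> ('h \<times> 'h \<times> 'u) list \<Rightarrow> ('h \<times> 'h \<times> 'u) list \<Rightarrow> bool" where
  "left_comodule_algebra sH \<Delta> \<epsilon> \<Phi> sU mU oU lam Pl Pli \<longleftrightarrow>
     kalg sU mU oU \<and>
     lin_to2 sU sH sU lam \<and>
     (\<forall>u v. teq2 sH sU (lam (mU u v)) (tm2 (*) mU (lam u) (lam v))) \<and>
     teq2 sH sU (lam oU) [(1, oU)] \<and>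
     tinv3 sH sH sU (*) (*) mU 1 1 oU Pl Pli \<and>
     (\<forall>u. teq3 sH sH sU (tm3 (*) (*) mU (app2_2 lam (lam u)) Pl)
                        (tm3 (*) (*) mU Pl (app2_1 \<Delta> (lam u)))) \<and>
     teq4 sH sH sH sU
       (tm4 (*) (*) (*) mU
          (tm4 (*) (*) (*) mU (map (\<lambda>(a, b, c). (1, a, b, c)) Pl) (app3_2 \<Delta> Pl))
          (map (\<lambda>(a, b, c). (a, b, c, oU)) \<Phi>))
       (tm4 (*) (*) (*) mU (app3_3 lam Pl) (app3_1 \<Delta> Pl)) \<and>
     (\<forall>u. sum_list (map (\<lambda>(h, v). sU (\<epsilon> h) v) (lam u)) = u) \<and>
     teq2 sH sU (map (\<lambda>(a, b, c). (sH (\<epsilon> b) a, c)) Pl) [(1, oU)]"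

definition right_comodule_algebra :: "('k::field \<Rightarrow> 'h::ring_1 \<Rightarrow> 'h) \<Rightarrow> ('h \<Rightarrow> ('h \<times> 'h) list) \<Rightarrow> ('h \<Rightarrow> 'k)
    \<Rightarrow> ('h \<times> 'h \<times> 'h) list
    \<Rightarrow> ('k \<Rightarrow> 'u::ab_group_add \<Rightarrow> 'u) \<Rightarrow> ('u \<Rightarrow> 'u \<Rightarrow> 'u) \<Rightarrow> 'u
    \<Rightarrow> ('u \<Rightarrow> ('u \<times> 'h) list) \<Rightarrow> ('u \<times> 'h \<times> 'h) list \<Rightarrow> ('u \<times> 'h \<times> 'h) list \<Rightarrow> bool" where
  "right_comodule_algebra sH \<Delta> \<epsilon> \<Phi> sU mU oU rho Pr Pri \<longleftrightarrow>
     kalg sU mU oU \<and>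
     lin_to2 sU sU sH rho \<and>
     (\<forall>u v. teq2 sU sH (rho (mU u v)) (tm2 mU (*) (rho u) (rho v))) \<and>
     teq2 sU sH (rho oU) [(oU, 1)] \<and>
     tinv3 sU sH sH mU (*) (*) oU 1 1 Pr Pri \<and>
     (\<forall>u. teq3 sU sH sH (tm3 mU (*) (*) Pr (app2_1 rho (rho u)))
                        (tm3 mU (*) (*) (app2_2 \<Delta> (rho u)) Pr)) \<and>
     teq4 sU sH sH sH
       (tm4 mU (*) (*) (*)
          (tm4 mU (*) (*) (*) (map (\<lambda>(a, b, c). (oU, a, b, c)) \<Phi>) (app3_2 \<Delta> Pr))
          (map (\<lambda>(a, b, c). (a, b, c, 1)) Pr))
       (tm4 mU (*) (*) (*) (app3_3 \<Delta> Pr) (app3_1 rho Pr)) \<and>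
     (\<forall>u. sum_list (map (\<lambda>(v, h). sU (\<epsilon> h) v) (rho u)) = u) \<and>
     teq2 sU sH (map (\<lambda>(a, b, c). (sU (\<epsilon> b) a, c)) Pr) [(oU, 1)]"

definition bicomodule_algebra :: "('k::field \<Rightarrow> 'h::ring_1 \<Rightarrow> 'h) \<Rightarrow> ('h \<Rightarrow> ('h \<times> 'h) list) \<Rightarrow> ('h \<Rightarrow> 'k)
    \<Rightarrow> ('h \<times> 'h \<times> 'h) list
    \<Rightarrow> ('k \<Rightarrow> 'u::ab_group_add \<Rightarrow> 'u) \<Rightarrow> ('u \<Rightarrow> 'u \<Rightarrow> 'u) \<Rightarrow> 'u
    \<Rightarrow> ('u \<Rightarrow> ('h \<times> 'u) list) \<Rightarrow> ('u \<Rightarrow> ('u \<times> 'h) list)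
    \<Rightarrow> ('h \<times> 'h \<times> 'u) list \<Rightarrow> ('h \<times> 'h \<times> 'u) list
    \<Rightarrow> ('u \<times> 'h \<times> 'h) list \<Rightarrow> ('u \<times> 'h \<times> 'h) list
    \<Rightarrow> ('h \<times> 'u \<times> 'h) list \<Rightarrow> ('h \<times> 'u \<times> 'h) list \<Rightarrow> bool" where
  "bicomodule_algebra sH \<Delta> \<epsilon> \<Phi> sU mU oU lam rho Pl Pli Pr Pri Plr Plri \<longleftrightarrow>
     left_comodule_algebra sH \<Delta> \<epsilon> \<Phi> sU mU oU lam Pl Pli \<and>
     right_comodule_algebra sH \<Delta> \<epsilon> \<Phi> sU mU oU rho Pr Pri \<and>
     tinv3 sH sU sH (*) mU (*) 1 oU 1 Plr Plri \<and>
     (\<forall>u. teq3 sH sU sH (tm3 (*) mU (*) (app2_2 rho (lam u)) Plr)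
                        (tm3 (*) mU (*) Plr (app2_1 lam (rho u)))) \<and>
     teq4 sH sH sU sH
       (tm4 (*) (*) mU (*)
          (tm4 (*) (*) mU (*) (map (\<lambda>(a, b, c). (1, a, b, c)) Plr) (app3_2 lam Plr))
          (map (\<lambda>(a, b, c). (a, b, c, 1)) Pl))
       (tm4 (*) (*) mU (*) (app3_3 rho Pl) (app3_1 \<Delta> Plr)) \<and>
     teq4 sH sU sH sH
       (tm4 (*) mU (*) (*)
          (tm4 (*) mU (*) (*) (map (\<lambda>(a, b, c). (1, a, b, c)) Pr) (app3_2 rho Plr))
          (map (\<lambda>(a, b, c). (a, b, c, 1)) Plr))
       (tm4 (*) mU (*) (*) (app3_3 \<Delta> Plr) (app3_1 lam Pr))"

text \<open>Multiplication of the twisted bimodule algebra  _F A_{F^-1}: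
  x o y = (G^1.x.F^1)(G^2.y.F^2), where Fi = G^1 (x) G^2 represents F^-1.\<close>
definition gauge_mult :: "('h \<Rightarrow> 'a \<Rightarrow> 'a) \<Rightarrow> ('a \<Rightarrow> 'h \<Rightarrow> 'a) \<Rightarrow> ('a \<Rightarrow> 'a \<Rightarrow> 'a::ab_group_add)
    \<Rightarrow> ('h \<times> 'h) list \<Rightarrow> ('h \<times> 'h) list \<Rightarrow> 'a \<Rightarrow> 'a \<Rightarrow> 'a" where
  "gauge_mult la ra mA F Fi x y =
     sum_list [mA (la g1 (ra x f1)) (la g2 (ra y f2)). (g1, g2) \<leftarrow> Fi, (f1, f2) \<leftarrow> F]"

text \<open>Reassociators of the twisted bicomodule algebra ^F A^{F^-1}:
  Phi_lambda (F^-1 (x) 1) and (1 (x) F) Phi_rho.\<close>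
definition gauge_Phi_lambda :: "('u \<Rightarrow> 'u \<Rightarrow> 'u) \<Rightarrow> 'u \<Rightarrow> ('h::ring_1 \<times> 'h \<times> 'u) list
    \<Rightarrow> ('h \<times> 'h) list \<Rightarrow> ('h \<times> 'h \<times> 'u) list" where
  "gauge_Phi_lambda mU oU Pl Fi = tm3 (*) (*) mU Pl (map (\<lambda>(a, b). (a, b, oU)) Fi)"

definition gauge_Phi_rho :: "('u \<Rightarrow> 'u \<Rightarrow> 'u) \<Rightarrow> 'u \<Rightarrow> ('u \<times> 'h::ring_1 \<times> 'h) list
    \<Rightarrow> ('h \<times> 'h) list \<Rightarrow> ('u \<times> 'h \<times> 'h) list" where
  "gauge_Phi_rho mU oU Pr F = tm3 mU (*) (*) (map (\<lambda>(a, b). (oU, a, b)) F) Pr"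

text \<open>L-R-smash product of pure tensors:
  (x # u)(y # v) = (xl1.x.t3 v<1> xr2)(xl2 u[-1] t1 . y . xr3) # xl3 u[0] t2 v<0> xr1,
  with Xl, Xr, Th representatives of Phi_lambda^-1, Phi_rho^-1, Phi_{lambda,rho}^-1.\<close>
definition smash :: "('h::ring_1 \<Rightarrow> 'a \<Rightarrow> 'a) \<Rightarrow> ('a \<Rightarrow> 'h \<Rightarrow> 'a) \<Rightarrow> ('a \<Rightarrow> 'a \<Rightarrow> 'a)
    \<Rightarrow> ('u \<Rightarrow> 'u \<Rightarrow> 'u) \<Rightarrow> ('u \<Rightarrow> ('h \<times> 'u) list) \<Rightarrow> ('u \<Rightarrow> ('u \<times> 'h) list)
    \<Rightarrow> ('h \<times> 'h \<times> 'u) list \<Rightarrow> ('u \<times> 'h \<times> 'h) list \<Rightarrow> ('h \<times> 'u \<times> 'h) list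
    \<Rightarrow> 'a \<Rightarrow> 'u \<Rightarrow> 'a \<Rightarrow> 'u \<Rightarrow> ('a \<times> 'u) list" where
  "smash la ra mA mU lam rho Xl Xr Th x u y v =
     [(mA (la l1 (ra x (t3 * v1 * r2))) (la (l2 * um * t1) (ra y r3)),
       mU (mU (mU (mU l3 u0) t2) v0) r1).
        (l1, l2, l3) \<leftarrow> Xl, (r1, r2, r3) \<leftarrow> Xr, (t1, t2, t3) \<leftarrow> Th,
        (um, u0) \<leftarrow> lam u, (v0, v1) \<leftarrow> rho v]"

definition smash_mult where
  "smash_mult la ra mA mU lam rho Xl Xr Th xs ys =
     concat [smash la ra mA mU lam rho Xl Xr Th x u y v. (x, u) \<leftarrow> xs, (y, v) \<leftarrow> ys]"

end

theory Submission
  imports Defs "HOL-Library.Multiset"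
begin

(*
  Expanding the twisted product (G^1.a.F^1)(G^2.b.F^2) inside a summand of the smash product
  and using associativity of the actions, the legs of F^-1 and F move onto the reassociators:
  the L-R-smash product over H_F with reassociators Ql, Qr is the one over H with
  reassociators (F^-1 (x) 1) Ql and Qr (1 (x) F).  As Ql is inverse to Phi_lambda (F^-1 (x) 1)
  and Qr to (1 (x) F) Phi_rho, these are Phi_lambda^-1 and Phi_rho^-1, and Phi_lambda,rho is
  not twisted at all.  Finally, the smash product is balanced in each reassociator, so it only
  depends on their classes in the triple tensor products, not on the chosen representatives.
*)

section \<open>Formal sums modulo a congruence\<close>

locale formal_sum_congruence =
  fixes R :: "'x list \<Rightarrow> 'x list \<Rightarrow> bool"
  assumes refl: "R xs xs"
    and sym: "R xs ys \<Longrightarrow> R ys xs"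
    and trans: "R xs ys \<Longrightarrow> R ys zs \<Longrightarrow> R xs zs"
    and append_cong: "R xs xs' \<Longrightarrow> R ys ys' \<Longrightarrow> R (xs @ ys) (xs' @ ys')"
    and append_commute: "R (xs @ ys) (ys @ xs)"
begin

lemma concat_map_cong:
  "(\<And>a. a \<in> set A \<Longrightarrow> R (f a) (g a)) \<Longrightarrow> R (concat (map f A)) (concat (map g A))"
  by (induct A) (auto intro: refl append_cong)

lemma mset_eq_imp_related: "mset xs = mset ys \<Longrightarrow> R xs ys"
proof (induct xs arbitrary: ys)
  case Nil
  then show ?case by (simp add: refl)
next
  case (Cons x xs)
  then obtain ys1 ys2 where ys: "ys = ys1 @ x # ys2"
    by (metis list.set_intros(1) set_mset_mset split_list)
  with Cons have "R ([x] @ xs) ([x] @ ys1 @ ys2)"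
    by (intro append_cong refl) simp
  moreover have "R (x # ys1 @ ys2) (ys1 @ x # ys2)"
    using append_cong[OF append_commute refl, of "[x]" ys1 ys2] by simp
  ultimately show ?case using ys trans by simp
qed

lemma concat_map_commute:
  "R (concat (map (\<lambda>a. concat (map (h a) B)) A)) (concat (map (\<lambda>b. concat (map (\<lambda>a. h a b) A)) B))"
  by (rule mset_eq_imp_related) (induct A; simp add: mset_concat comp_def sum_list_addf)

lemma map_commute:
  "R (concat (map (\<lambda>a. map (h a) B) A)) (concat (map (\<lambda>b. map (\<lambda>a. h a b) A) B))"
  using concat_map_commute[of "\<lambda>a b. [h a b]"] by simp

lemma concat_map_append:
  "R (concat (map (\<lambda>a. f a @ g a) A)) (concat (map f A) @ concat (map g A))"
  by (rule mset_eq_imp_related) (simp add: mset_concat comp_def sum_list_addf)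

end

interpretation teq2: formal_sum_congruence "teq2 s1 s2" for s1 s2
  by unfold_locales (fact teq2.intros)+

interpretation teq3: formal_sum_congruence "teq3 s1 s2 s3" for s1 s2 s3
  by unfold_locales (fact teq3.intros)+

declare t2_trans [trans] t3_trans [trans]

(* The clauses mirror the generators of teq3, which has a zero rule for the first slot only. *)
definition balanced3 :: "('x list \<Rightarrow> 'x list \<Rightarrow> bool) \<Rightarrow> ('k::field \<Rightarrow> 'a::ab_group_add \<Rightarrow> 'a)
    \<Rightarrow> ('k \<Rightarrow> 'b::ab_group_add \<Rightarrow> 'b) \<Rightarrow> ('k \<Rightarrow> 'c::ab_group_add \<Rightarrow> 'c) \<Rightarrow> ('a \<Rightarrow> 'b \<Rightarrow> 'c \<Rightarrow> 'x list) \<Rightarrow> bool" where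
  "balanced3 R s1 s2 s3 \<phi> \<longleftrightarrow>
     (\<forall>b c. R (\<phi> 0 b c) []) \<and>
     (\<forall>a a' b c. R (\<phi> (a + a') b c) (\<phi> a b c @ \<phi> a' b c)) \<and>
     (\<forall>a b b' c. R (\<phi> a (b + b') c) (\<phi> a b c @ \<phi> a b' c)) \<and>
     (\<forall>a b c c'. R (\<phi> a b (c + c')) (\<phi> a b c @ \<phi> a b c')) \<and>
     (\<forall>r a b c. R (\<phi> (s1 r a) b c) (\<phi> a (s2 r b) c)) \<and>
     (\<forall>r a b c. R (\<phi> (s1 r a) b c) (\<phi> a b (s3 r c)))"

context formal_sum_congruence
begin

lemma concat_map_teq3_cong:
  assumes "balanced3 R s1 s2 s3 \<phi>" and "teq3 s1 s2 s3 xs ys"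
  shows "R (concat (map (\<lambda>(a, b, c). \<phi> a b c) xs)) (concat (map (\<lambda>(a, b, c). \<phi> a b c) ys))"
  using assms(2)
proof (induction rule: teq3.induct)
  case (t3_sym xs ys)
  then show ?case using sym by blast
next
  case (t3_trans xs ys zs)
  then show ?case using trans by blast
next
  case (t3_app xs xs' ys ys')
  then show ?case by (simp add: append_cong)
next
  case (t3_swap xs ys)
  then show ?case by (simp add: append_commute)
qed (use assms(1) refl in \<open>auto simp: balanced3_def\<close>)

lemma balanced3_concat_map:
  assumes "\<And>q. q \<in> set Q \<Longrightarrow> balanced3 R s1 s2 s3 (\<lambda>a b c. \<psi> a b c q)"
  shows "balanced3 R s1 s2 s3 (\<lambda>a b c. concat (map (\<psi> a b c) Q))"
proof -
  have additive: "R (concat (map f Q)) (concat (map g Q) @ concat (map h Q))"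
    if "\<And>q. q \<in> set Q \<Longrightarrow> R (f q) (g q @ h q)" for f g h
    using trans[OF concat_map_cong concat_map_append] that by blast
  have zero: "R (concat (map f Q)) []" if "\<And>q. q \<in> set Q \<Longrightarrow> R (f q) []" for f
    using that by (induct Q) (auto intro: refl append_cong[of _ "[]" _ "[]", simplified])
  show ?thesis
    unfolding balanced3_def
    by (intro conjI allI additive zero concat_map_cong) (use assms in \<open>auto simp: balanced3_def\<close>)
qed

lemma balanced3_map:
  assumes "\<And>q. q \<in> set Q \<Longrightarrow> balanced3 R s1 s2 s3 (\<lambda>a b c. [\<psi> a b c q])"
  shows "balanced3 R s1 s2 s3 (\<lambda>a b c. map (\<psi> a b c) Q)"
proof -
  have "balanced3 R s1 s2 s3 (\<lambda>a b c. concat (map (\<lambda>q. [\<psi> a b c q]) Q))"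
    by (rule balanced3_concat_map) (rule assms)
  then show ?thesis by simp
qed

end

section \<open>Triple tensor products of algebras\<close>

lemma concat_concat_map: "concat (concat (map f xs)) = concat (map (\<lambda>x. concat (f x)) xs)"
  by (induct xs) simp_all

lemma tm3_concat_map:
  "tm3 m1 m2 m3 X Y = concat (map (\<lambda>(a, b, c). map (\<lambda>(a', b', c'). (m1 a a', m2 b b', m3 c c')) Y) X)"
  by (simp add: tm3_def)

lemma bilinear_mult_zero_left: "bilinear_mult s m \<Longrightarrow> m 0 a = 0"
  unfolding bilinear_mult_def by (metis add_cancel_right_left add_0)

lemma bilinear_mult_zero_right: "bilinear_mult s m \<Longrightarrow> m a 0 = 0"
  unfolding bilinear_mult_def by (metis add_cancel_right_left add_0)

lemma balanced3_tensor_mult_left: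
  assumes "bilinear_mult s1 m1" "bilinear_mult s2 m2" "bilinear_mult s3 m3"
  shows "balanced3 (teq3 s1 s2 s3) s1 s2 s3 (\<lambda>a b c. [(m1 a a', m2 b b', m3 c c')])"
  using assms bilinear_mult_zero_left[OF assms(1)] unfolding balanced3_def bilinear_mult_def
  by (simp add: t3_zero t3_add1 t3_add2 t3_add3 t3_sc2 t3_sc3)

lemma balanced3_tensor_mult_right:
  assumes "bilinear_mult s1 m1" "bilinear_mult s2 m2" "bilinear_mult s3 m3"
  shows "balanced3 (teq3 s1 s2 s3) s1 s2 s3 (\<lambda>a' b' c'. [(m1 a a', m2 b b', m3 c c')])"
  using assms bilinear_mult_zero_right[OF assms(1)] unfolding balanced3_def bilinear_mult_def
  by (simp add: t3_zero t3_add1 t3_add2 t3_add3 t3_sc2 t3_sc3)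

lemma tm3_cong_left:
  assumes "bilinear_mult s1 m1" "bilinear_mult s2 m2" "bilinear_mult s3 m3"
    and "teq3 s1 s2 s3 X X'"
  shows "teq3 s1 s2 s3 (tm3 m1 m2 m3 X Y) (tm3 m1 m2 m3 X' Y)"
proof -
  have "balanced3 (teq3 s1 s2 s3) s1 s2 s3
      (\<lambda>a b c. map (\<lambda>(a', b', c'). (m1 a a', m2 b b', m3 c c')) Y)"
    by (rule teq3.balanced3_map) (auto intro: balanced3_tensor_mult_left[OF assms(1-3)])
  then show ?thesis
    unfolding tm3_concat_map using assms(4) by (rule teq3.concat_map_teq3_cong)
qed

lemma tm3_cong_right:
  assumes "bilinear_mult s1 m1" "bilinear_mult s2 m2" "bilinear_mult s3 m3"
    and "teq3 s1 s2 s3 Y Y'"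
  shows "teq3 s1 s2 s3 (tm3 m1 m2 m3 X Y) (tm3 m1 m2 m3 X Y')"
proof -
  let ?\<phi> = "\<lambda>a' b' c'. map (\<lambda>(a, b, c). (m1 a a', m2 b b', m3 c c')) X"
  have tm3_swap: "teq3 s1 s2 s3 (tm3 m1 m2 m3 X Z) (concat (map (\<lambda>(a', b', c'). ?\<phi> a' b' c') Z))" for Z
    unfolding tm3_concat_map using teq3.map_commute by (simp add: case_prod_beta')
  have "balanced3 (teq3 s1 s2 s3) s1 s2 s3 ?\<phi>"
    by (rule teq3.balanced3_map) (auto intro: balanced3_tensor_mult_right[OF assms(1-3)])
  then have "teq3 s1 s2 s3 (concat (map (\<lambda>(a', b', c'). ?\<phi> a' b' c') Y))
                            (concat (map (\<lambda>(a', b', c'). ?\<phi> a' b' c') Y'))"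
    using assms(4) by (rule teq3.concat_map_teq3_cong)
  then show ?thesis
    using tm3_swap[of Y] tm3_swap[of Y'] by (meson t3_sym t3_trans)
qed

lemma tm3_assoc:
  assumes "kalg s1 m1 o1" "kalg s2 m2 o2" "kalg s3 m3 o3"
  shows "tm3 m1 m2 m3 (tm3 m1 m2 m3 X Y) Z = tm3 m1 m2 m3 X (tm3 m1 m2 m3 Y Z)"
  using assms unfolding tm3_concat_map kalg_def
  by (induct X) (auto simp: map_concat comp_def split_def)

lemma tm3_unit_left:
  assumes "kalg s1 m1 o1" "kalg s2 m2 o2" "kalg s3 m3 o3"
  shows "tm3 m1 m2 m3 [(o1, o2, o3)] X = X"
  using assms unfolding tm3_concat_map kalg_def unital_kalg_def
  by (induct X) auto

lemma tm3_unit_right: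
  assumes "kalg s1 m1 o1" "kalg s2 m2 o2" "kalg s3 m3 o3"
  shows "tm3 m1 m2 m3 X [(o1, o2, o3)] = X"
  using assms unfolding tm3_concat_map kalg_def unital_kalg_def
  by (induct X) auto

lemma tm3_eq_left_inverse:
  assumes K: "kalg s1 m1 o1" "kalg s2 m2 o2" "kalg s3 m3 o3"
    and left_inverse: "teq3 s1 s2 s3 (tm3 m1 m2 m3 Y X) [(o1, o2, o3)]"
    and right_inverse: "teq3 s1 s2 s3 (tm3 m1 m2 m3 (tm3 m1 m2 m3 X Z) W) [(o1, o2, o3)]"
  shows "teq3 s1 s2 s3 (tm3 m1 m2 m3 Z W) Y"
proof -
  have B: "bilinear_mult s1 m1" "bilinear_mult s2 m2" "bilinear_mult s3 m3"
    using K unfolding kalg_def unital_kalg_def by blast+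
  have "tm3 m1 m2 m3 Z W = tm3 m1 m2 m3 [(o1, o2, o3)] (tm3 m1 m2 m3 Z W)"
    by (simp add: tm3_unit_left[OF K])
  also have "teq3 s1 s2 s3 \<dots> (tm3 m1 m2 m3 (tm3 m1 m2 m3 Y X) (tm3 m1 m2 m3 Z W))"
    by (rule tm3_cong_left[OF B t3_sym[OF left_inverse]])
  also have "\<dots> = tm3 m1 m2 m3 Y (tm3 m1 m2 m3 (tm3 m1 m2 m3 X Z) W)"
    by (simp add: tm3_assoc[OF K])
  also have "teq3 s1 s2 s3 \<dots> (tm3 m1 m2 m3 Y [(o1, o2, o3)])"
    by (rule tm3_cong_right[OF B right_inverse])
  also have "\<dots> = Y"
    by (rule tm3_unit_right[OF K])
  finally show ?thesis .
qed

lemma tm3_eq_right_inverse: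
  assumes K: "kalg s1 m1 o1" "kalg s2 m2 o2" "kalg s3 m3 o3"
    and right_inverse: "teq3 s1 s2 s3 (tm3 m1 m2 m3 X Y) [(o1, o2, o3)]"
    and left_inverse: "teq3 s1 s2 s3 (tm3 m1 m2 m3 W (tm3 m1 m2 m3 Z X)) [(o1, o2, o3)]"
  shows "teq3 s1 s2 s3 (tm3 m1 m2 m3 W Z) Y"
proof -
  have B: "bilinear_mult s1 m1" "bilinear_mult s2 m2" "bilinear_mult s3 m3"
    using K unfolding kalg_def unital_kalg_def by blast+
  have "tm3 m1 m2 m3 W Z = tm3 m1 m2 m3 (tm3 m1 m2 m3 W Z) [(o1, o2, o3)]"
    by (simp add: tm3_unit_right[OF K])
  also have "teq3 s1 s2 s3 \<dots> (tm3 m1 m2 m3 (tm3 m1 m2 m3 W Z) (tm3 m1 m2 m3 X Y))"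
    by (rule tm3_cong_right[OF B t3_sym[OF right_inverse]])
  also have "\<dots> = tm3 m1 m2 m3 (tm3 m1 m2 m3 W (tm3 m1 m2 m3 Z X)) Y"
    by (simp add: tm3_assoc[OF K])
  also have "teq3 s1 s2 s3 \<dots> (tm3 m1 m2 m3 [(o1, o2, o3)] Y)"
    by (rule tm3_cong_left[OF B left_inverse])
  also have "\<dots> = Y"
    by (rule tm3_unit_left[OF K])
  finally show ?thesis .
qed

section \<open>The L-R-smash product summand by summand\<close>

lemma teq2_zero_right:
  assumes "vector_space s1" "vector_space s2"
  shows "teq2 s1 s2 [(a, 0)] []"
proof -
  have "teq2 s1 s2 [(s1 0 a, 0)] [(a, s2 0 0)]"
    by (rule t2_sc)
  then have "teq2 s1 s2 [(a, 0)] [(0, 0)]"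
    using assms by (simp add: module_iff_vector_space[symmetric] module.scale_zero_left
                              module.scale_zero_right t2_sym)
  then show ?thesis
    using t2_zero t2_trans by blast
qed

lemma teq2_sum_list_left: "teq2 s1 s2 [(sum_list as, b)] (map (\<lambda>a. (a, b)) as)"
proof (induct as)
  case Nil
  show ?case by (simp add: t2_zero)
next
  case (Cons a as)
  have "teq2 s1 s2 [(a + sum_list as, b)] ([(a, b)] @ [(sum_list as, b)])"
    using t2_add1 by simp
  also have "teq2 s1 s2 \<dots> ([(a, b)] @ map (\<lambda>a. (a, b)) as)"
    using Cons by (intro t2_app t2_refl)
  finally show ?case by simp
qed

definition smash_index :: "('h \<times> 'u \<times> 'h) list \<Rightarrow> ('h \<times> 'u) list \<Rightarrow> ('u \<times> 'h) list
    \<Rightarrow> (('h \<times> 'u \<times> 'h) \<times> ('h \<times> 'u) \<times> ('u \<times> 'h)) list" where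
  "smash_index Th lu rv = [(t, w, z). t \<leftarrow> Th, w \<leftarrow> lu, z \<leftarrow> rv]"

definition smash_term :: "('h::ring_1 \<Rightarrow> 'a \<Rightarrow> 'a) \<Rightarrow> ('a \<Rightarrow> 'h \<Rightarrow> 'a) \<Rightarrow> ('a \<Rightarrow> 'a \<Rightarrow> 'a)
    \<Rightarrow> ('u \<Rightarrow> 'u \<Rightarrow> 'u) \<Rightarrow> 'a \<Rightarrow> 'a \<Rightarrow> 'h \<times> 'h \<times> 'u \<Rightarrow> 'u \<times> 'h \<times> 'h
    \<Rightarrow> ('h \<times> 'u \<times> 'h) \<times> ('h \<times> 'u) \<times> ('u \<times> 'h) \<Rightarrow> 'a \<times> 'u" where
  "smash_term la ra mA mU x y = (\<lambda>(l1, l2, l3) (r1, r2, r3) ((t1, t2, t3), (um, u0), (v0, v1)).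
     (mA (la l1 (ra x (t3 * v1 * r2))) (la (l2 * um * t1) (ra y r3)),
      mU (mU (mU (mU l3 u0) t2) v0) r1))"

lemma smash_eq_concat_smash_term:
  "smash la ra mA mU lam rho Xl Xr Th x u y v =
     concat (map (\<lambda>l. concat (map (\<lambda>r. map (smash_term la ra mA mU x y l r)
                                                (smash_index Th (lam u) (rho v))) Xr)) Xl)"
  unfolding smash_def smash_index_def smash_term_def
  by (simp add: map_concat comp_def split_def)

context
  fixes sH :: "'k::field \<Rightarrow> 'h::ring_1 \<Rightarrow> 'h"
    and sA :: "'k \<Rightarrow> 'a::ab_group_add \<Rightarrow> 'a"
    and la :: "'h \<Rightarrow> 'a \<Rightarrow> 'a" and ra :: "'a \<Rightarrow> 'h \<Rightarrow> 'a"
    and mA :: "'a \<Rightarrow> 'a \<Rightarrow> 'a" and oA :: 'a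
    and sU :: "'k \<Rightarrow> 'u::ab_group_add \<Rightarrow> 'u"
    and mU :: "'u \<Rightarrow> 'u \<Rightarrow> 'u" and oU :: 'u
    and \<Delta> :: "'h \<Rightarrow> ('h \<times> 'h) list" and \<epsilon> :: "'h \<Rightarrow> 'k"
    and \<Phi> \<Phi>i :: "('h \<times> 'h \<times> 'h) list"
  assumes bimodule: "bimodule_algebra sH \<Delta> \<epsilon> \<Phi> \<Phi>i sA la ra mA oA"
    and H_algebra: "kalg sH (*) 1" and U_algebra: "kalg sU mU oU"
begin

lemma mults_bilinear: "bilinear_mult sH (*)" "bilinear_mult sU mU" "bilinear_mult sA mA"
  using H_algebra U_algebra bimodule unfolding kalg_def unital_kalg_def bimodule_algebra_def
  by blast+

lemma actions_linear:
  "la (h + h') z = la h z + la h' z" "la h (z + z') = la h z + la h z'"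
  "la (sH r h) z = sA r (la h z)" "la h (sA r z) = sA r (la h z)"
  "ra z (h + h') = ra z h + ra z h'" "ra (z + z') h = ra z h + ra z' h"
  "ra z (sH r h) = sA r (ra z h)" "ra (sA r z) h = sA r (ra z h)"
  using bimodule unfolding bimodule_algebra_def by auto

lemma left_action_zero: "la 0 z = 0"
  using bimodule unfolding bimodule_algebra_def by (metis add_cancel_right_left add_0)

lemma A_mult_zero_left: "mA 0 z = 0"
  by (rule bilinear_mult_zero_left[OF mults_bilinear(3)])

lemma AU_tensor_zero_right: "teq2 sA sU [(z, 0)] []"
  using bimodule U_algebra unfolding bimodule_algebra_def unital_kalg_def kalg_def
  by (metis teq2_zero_right)

lemma U_mult_zero_right: "mU z 0 = 0"
  by (rule bilinear_mult_zero_right[OF mults_bilinear(2)])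

lemma smash_term_balanced_left:
  "balanced3 (teq2 sA sU) sH sH sU (\<lambda>a b c. [smash_term la ra mA mU x y (a, b, c) r i])"
proof -
  obtain r1 r2 r3 where r: "r = (r1, r2, r3)" by (cases r)
  obtain t1 t2 t3 um u0 v0 v1 where i: "i = ((t1, t2, t3), (um, u0), (v0, v1))" by (cases i) auto
  show ?thesis
    unfolding balanced3_def smash_term_def r i using mults_bilinear[unfolded bilinear_mult_def]
    by (simp add: actions_linear left_action_zero A_mult_zero_left ring_distribs
                  t2_zero t2_add1 t2_add2 t2_sc t2_refl)
qed

lemma smash_term_balanced_right:
  "balanced3 (teq2 sA sU) sU sH sH (\<lambda>a b c. [smash_term la ra mA mU x y l (a, b, c) i])"
proof -
  obtain l1 l2 l3 where l: "l = (l1, l2, l3)" by (cases l)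
  obtain t1 t2 t3 um u0 v0 v1 where i: "i = ((t1, t2, t3), (um, u0), (v0, v1))" by (cases i) auto
  show ?thesis
    unfolding balanced3_def smash_term_def l i using mults_bilinear[unfolded bilinear_mult_def]
    by (simp add: actions_linear U_mult_zero_right AU_tensor_zero_right ring_distribs
                  t2_add1 t2_add2 t2_sym[OF t2_sc] t2_refl)
qed

lemma smash_teq3_cong_left:
  assumes "teq3 sH sH sU Xl Xl'"
  shows "teq2 sA sU (smash la ra mA mU lam rho Xl Xr Th x u y v)
                    (smash la ra mA mU lam rho Xl' Xr Th x u y v)"
proof -
  let ?I = "smash_index Th (lam u) (rho v)"
  have "balanced3 (teq2 sA sU) sH sH sU
      (\<lambda>a b c. concat (map (\<lambda>r. map (smash_term la ra mA mU x y (a, b, c) r) ?I) Xr))"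
    by (intro teq2.balanced3_concat_map teq2.balanced3_map smash_term_balanced_left)
  from teq2.concat_map_teq3_cong[OF this assms] show ?thesis
    unfolding smash_eq_concat_smash_term by (simp add: case_prod_beta')
qed

lemma smash_teq3_cong_right:
  assumes "teq3 sU sH sH Xr Xr'"
  shows "teq2 sA sU (smash la ra mA mU lam rho Xl Xr Th x u y v)
                    (smash la ra mA mU lam rho Xl Xr' Th x u y v)"
proof -
  let ?I = "smash_index Th (lam u) (rho v)"
  have "balanced3 (teq2 sA sU) sU sH sH (\<lambda>a b c. map (smash_term la ra mA mU x y l (a, b, c)) ?I)"
    for l by (intro teq2.balanced3_map smash_term_balanced_right)
  from teq2.concat_map_teq3_cong[OF this assms] show ?thesis
    unfolding smash_eq_concat_smash_term by (intro teq2.concat_map_cong) (simp add: case_prod_beta')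
qed

lemma smash_term_gauge_mult:
  "teq2 sA sU [smash_term la ra (gauge_mult la ra mA F Fi) mU x y (l1, l2, l3) (r1, r2, r3) i]
     [smash_term la ra mA mU x y (g1 * l1, g2 * l2, mU oU l3) (mU r1 oU, r2 * f1, r3 * f2) i.
        (g1, g2) \<leftarrow> Fi, (f1, f2) \<leftarrow> F]"
proof -
  obtain t1 t2 t3 um u0 v0 v1 where i: "i = ((t1, t2, t3), (um, u0), (v0, v1))" by (cases i) auto
  have actions: "la h (la h' z) = la (h * h') z" "ra (ra z h) h' = ra z (h * h')"
    "ra (la h z) h' = la h (ra z h')" for h h' z
    using bimodule unfolding bimodule_algebra_def by auto
  have unit: "mU oU z = z" "mU z oU = z" for z
    using U_algebra unfolding kalg_def unital_kalg_def by auto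
  show ?thesis
    unfolding smash_term_def gauge_mult_def i
    by (simp add: split_def comp_def actions unit mult.assoc)
       (rule t2_trans[OF teq2_sum_list_left], simp add: map_concat comp_def t2_refl)
qed

lemma smash_terms_gauge_mult:
  "teq2 sA sU (map (smash_term la ra (gauge_mult la ra mA F Fi) mU x y (l1, l2, l3) (r1, r2, r3)) I)
     [smash_term la ra mA mU x y (g1 * l1, g2 * l2, mU oU l3) (mU r1 oU, r2 * f1, r3 * f2) i.
        (g1, g2) \<leftarrow> Fi, (f1, f2) \<leftarrow> F, i \<leftarrow> I]"
proof -
  let ?T = "\<lambda>(g1, g2) (f1, f2).
    smash_term la ra mA mU x y (g1 * l1, g2 * l2, mU oU l3) (mU r1 oU, r2 * f1, r3 * f2)"
  have "teq2 sA sU (concat (map (\<lambda>i. [smash_term la ra (gauge_mult la ra mA F Fi) mU x y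
                                           (l1, l2, l3) (r1, r2, r3) i]) I))
                   (concat (map (\<lambda>i. concat (map (\<lambda>g. map (\<lambda>f. ?T g f i) F) Fi)) I))"
    using smash_term_gauge_mult by (intro teq2.concat_map_cong) (simp add: split_def)
  also have "teq2 sA sU \<dots> (concat (map (\<lambda>g. concat (map (\<lambda>i. map (\<lambda>f. ?T g f i) F) I)) Fi))"
    by (rule teq2.concat_map_commute)
  also have "teq2 sA sU \<dots> (concat (map (\<lambda>g. concat (map (\<lambda>f. map (?T g f) I) F)) Fi))"
    by (intro teq2.concat_map_cong teq2.map_commute)
  finally show ?thesis
    by (simp add: case_prod_beta')
qed

lemma smash_gauge_mult:
  "teq2 sA sU (smash la ra (gauge_mult la ra mA F Fi) mU lam rho Xl Xr Th x u y v)
     (smash la ra mA mU lam rho (tm3 (*) (*) mU (map (\<lambda>(g1, g2). (g1, g2, oU)) Fi) Xl)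
        (tm3 mU (*) (*) Xr (map (\<lambda>(f1, f2). (oU, f1, f2)) F)) Th x u y v)"
proof -
  let ?I = "smash_index Th (lam u) (rho v)"
  let ?T = "\<lambda>(g1, g2) (l1, l2, l3) (r1, r2, r3) (f1, f2).
    smash_term la ra mA mU x y (g1 * l1, g2 * l2, mU oU l3) (mU r1 oU, r2 * f1, r3 * f2)"
  have "teq2 sA sU (smash la ra (gauge_mult la ra mA F Fi) mU lam rho Xl Xr Th x u y v)
     (concat (map (\<lambda>l. concat (map (\<lambda>r. concat (map (\<lambda>g. concat (map (\<lambda>f.
        map (?T g l r f) ?I) F)) Fi)) Xr)) Xl))"
    unfolding smash_eq_concat_smash_term using smash_terms_gauge_mult
    by (intro teq2.concat_map_cong) (clarsimp simp: split_def)
  also have "teq2 sA sU \<dots>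
     (concat (map (\<lambda>l. concat (map (\<lambda>g. concat (map (\<lambda>r. concat (map (\<lambda>f.
        map (?T g l r f) ?I) F)) Xr)) Fi)) Xl))"
    by (intro teq2.concat_map_cong teq2.concat_map_commute)
  also have "teq2 sA sU \<dots>
     (concat (map (\<lambda>g. concat (map (\<lambda>l. concat (map (\<lambda>r. concat (map (\<lambda>f.
        map (?T g l r f) ?I) F)) Xr)) Xl)) Fi))"
    by (rule teq2.concat_map_commute)
  finally show ?thesis
    unfolding smash_eq_concat_smash_term tm3_concat_map
    by (simp add: map_concat concat_concat_map comp_def split_def)
qed

end

lemma smash_mult_teq2_cong:
  assumes "\<And>x u y v. teq2 sA sU (smash la ra mA mU lam rho Xl Xr Th x u y v)
                                 (smash la' ra' mA' mU' lam' rho' Xl' Xr' Th' x u y v)"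
  shows "teq2 sA sU (smash_mult la ra mA mU lam rho Xl Xr Th xs ys)
                    (smash_mult la' ra' mA' mU' lam' rho' Xl' Xr' Th' xs ys)"
  unfolding smash_mult_def concat_concat_map
  by (intro teq2.concat_map_cong) (auto simp: split_def intro!: teq2.concat_map_cong assms)

theorem proposition2p10:
  fixes sH :: "'k::field \<Rightarrow> 'h::ring_1 \<Rightarrow> 'h"
    and \<Delta> :: "'h \<Rightarrow> ('h \<times> 'h) list" and \<epsilon> :: "'h \<Rightarrow> 'k"
    and \<Phi> \<Phi>i :: "('h \<times> 'h \<times> 'h) list"
    and sA :: "'k \<Rightarrow> 'a::ab_group_add \<Rightarrow> 'a"
    and la :: "'h \<Rightarrow> 'a \<Rightarrow> 'a" and ra :: "'a \<Rightarrow> 'h \<Rightarrow> 'a"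
    and mA :: "'a \<Rightarrow> 'a \<Rightarrow> 'a" and oA :: 'a
    and sU :: "'k \<Rightarrow> 'u::ab_group_add \<Rightarrow> 'u"
    and mU :: "'u \<Rightarrow> 'u \<Rightarrow> 'u" and oU :: 'u
    and lam :: "'u \<Rightarrow> ('h \<times> 'u) list" and rho :: "'u \<Rightarrow> ('u \<times> 'h) list"
    and Pl Pli :: "('h \<times> 'h \<times> 'u) list"
    and Pr Pri :: "('u \<times> 'h \<times> 'h) list"
    and Plr Plri :: "('h \<times> 'u \<times> 'h) list"
    and F Fi :: "('h \<times> 'h) list"
    and Ql :: "('h \<times> 'h \<times> 'u) list" and Qr :: "('u \<times> 'h \<times> 'h) list"
    and xs ys :: "('a \<times> 'u) list"
  assumes "quasi_bialgebra sH \<Delta> \<epsilon> \<Phi> \<Phi>i"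
    and "bimodule_algebra sH \<Delta> \<epsilon> \<Phi> \<Phi>i sA la ra mA oA"
    and "bicomodule_algebra sH \<Delta> \<epsilon> \<Phi> sU mU oU lam rho Pl Pli Pr Pri Plr Plri"
    and "gauge_transformation sH \<epsilon> F Fi"
    and "tinv3 sH sH sU (*) (*) mU 1 1 oU (gauge_Phi_lambda mU oU Pl Fi) Ql"
    and "tinv3 sU sH sH mU (*) (*) oU 1 1 (gauge_Phi_rho mU oU Pr F) Qr"
  shows "teq2 sA sU
           (smash_mult la ra (gauge_mult la ra mA F Fi) mU lam rho Ql Qr Plri xs ys)
           (smash_mult la ra mA mU lam rho Pli Pri Plri xs ys)"
proof -
  have H: "kalg sH (*) 1"
    using assms(1) unfolding quasi_bialgebra_def by blast
  have U: "kalg sU mU oU"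
    and Pl_inverse: "tinv3 sH sH sU (*) (*) mU 1 1 oU Pl Pli"
    and Pr_inverse: "tinv3 sU sH sH mU (*) (*) oU 1 1 Pr Pri"
    using assms(3) unfolding bicomodule_algebra_def left_comodule_algebra_def right_comodule_algebra_def
    by blast+
  have Ql: "teq3 sH sH sU (tm3 (*) (*) mU (map (\<lambda>(g1, g2). (g1, g2, oU)) Fi) Ql) Pli"
    using Pl_inverse assms(5) unfolding tinv3_def gauge_Phi_lambda_def
    by (blast intro: tm3_eq_left_inverse[OF H H U])
  have Qr: "teq3 sU sH sH (tm3 mU (*) (*) Qr (map (\<lambda>(f1, f2). (oU, f1, f2)) F)) Pri"
    using Pr_inverse assms(6) unfolding tinv3_def gauge_Phi_rho_def
    by (blast intro: tm3_eq_right_inverse[OF U H H])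
  have "teq2 sA sU (smash la ra (gauge_mult la ra mA F Fi) mU lam rho Ql Qr Plri x u y v)
                   (smash la ra mA mU lam rho Pli Pri Plri x u y v)" for x u y v
    by (rule t2_trans[OF t2_trans[OF smash_gauge_mult[OF assms(2) H U]
                                      smash_teq3_cong_left[OF assms(2) H U Ql]]
                         smash_teq3_cong_right[OF assms(2) H U Qr]])
  then show ?thesis
    by (rule smash_mult_teq2_cong)
qed

end
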